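(* Let $a,d\in\mathbb{N}$ and $m,n\in\mathbb{N}$ with $m,n\ge 2$. Let $X_1,\dots,X_m$ be i.i.d. random variables uniformly distributed on $\{1,\dots,a\}$ and $Y_1,\dots,Y_n$ i.i.d. random variables uniformly distributed on $\{1,\dots,d\}$, independent of the $X_i$. Let $X^{(1)}\ge X^{(2)}$ be the largest and second largest values among $X_1,\dots,X_m$ (counted with multiplicity), and similarly $Y^{(1)}\ge Y^{(2)}$ among $Y_1,\dots,Y_n$. Let $P=\Pr\left(X^{(1)}\le Y^{(1)}\text{ and }X^{(2)}\le Y^{(2)}\right)$. If $a\ge d$, then \begin{align*} P&= \sum_{y_1=2}^{d} \sum_{y_2=1}^{y_{1}-1} \frac{n\big(y_2^{n-1}-(y_2-1)^{n-1}\big)\big(m(y_1-y_2)y_{2}^{m-1}+y_{2}^{m} \big)}{a^m d^n}\\ & \quad + \sum_{y_{1}=1}^{d}\frac{\big( y_1^n-(y_1-1)^{n}-n(y_1-1)^{n-1} \big)\, y_{1}^{m}}{a^m d^n}, \end{align*} and if $a\le d$, then \begin{align*} P&= \sum_{y_1=2}^{a} \sum_{y_2=1}^{y_{1}-1} \frac{n\big(y_2^{n-1}-(y_2-1)^{n-1}\big)\big(m(y_1-y_2)y_{2}^{m-1}+y_{2}^{m} \big)}{a^m d^n} \\ & \quad + \sum_{y_{1}=1}^{a}\frac{\big( y_1^n-(y_1-1)^{n}-n(y_1-1)^{n-1} \big)\, y_{1}^{m}}{a^m d^n} \\ & \quad + \sum_{y_{1}=a+1}^d \sum_{y_2=1}^a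 \frac{n\big(y_2^{n-1}-(y_2-1)^{n-1}\big)\big(m(a-y_2)y_{2}^{m-1}+y_{2}^{m} \big)}{a^m d^n} \\ & \quad + \frac{a^m d^n-n(d-a)a^{n+m-1}-a^{m+n}}{a^m d^n}. \end{align*}
   Context: $X^{(i)}$ denotes the $i$-th largest of the dice values (order statistics). In the paper's notation the event is $\{X_i\}_m>_{2,0}\{Y_j\}_n$: none of the comparisons $X^{(1)}>Y^{(1)}$, $X^{(2)}>Y^{(2)}$ holds (ties go to the defender). *)

theory Defs
  imports "HOL-Probability.Probability"
begin

definition kth_largest :: "nat \<Rightarrow> nat \<Rightarrow> (nat \<Rightarrow> nat) \<Rightarrow> nat" where
  "kth_largest k N x = rev (sort (map x [0..<N])) ! (k - 1)"

definition dice :: "nat \<Rightarrow> nat \<Rightarrow> (nat \<Rightarrow> nat) pmf" where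
  "dice N a = Pi_pmf {..<N} 0 (\<lambda>_. pmf_of_set {1..a})"

end

theory Submission
  imports Defs
begin

text \<open>Condition on the defender's top two dice \<open>(y1, y2)\<close>. The attacker then fails on both
  comparisons iff all \<open>m\<close> attacking dice are at most \<open>u = min y1 a\<close> and at most one of them
  exceeds \<open>v = min y2 a\<close>, which has probability \<open>(v^m + m (u - v) v^(m-1)) / a^m\<close>. The same
  formula is the joint distribution function of the defender's top two dice, and inclusion-exclusion
  turns it into their joint law. Summing over \<open>(y1, y2)\<close> gives the result; when \<open>a < d\<close>, the pairs
  with \<open>y2 > a\<close> have conditional probability 1 and together carry the probability that the
  defender's second largest die exceeds \<open>a\<close>.\<close>

lemma measure_pmf_prob_cong_support:
  assumes "\<And>x. x \<in> set_pmf p \<Longrightarrow> x \<in> A \<longleftrightarrow> x \<in> B"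
  shows "measure_pmf.prob p A = measure_pmf.prob p B"
  using assms by (intro measure_prob_cong_0) (auto simp: set_pmf_iff)

lemma measure_bind_pmf:
  "measure_pmf.prob (bind_pmf M f) A = (\<integral>x. measure_pmf.prob (f x) A \<partial>M)"
  unfolding measure_pmf_bind
  by (subst measure_pmf.measure_bind[where N="count_space UNIV"]) (auto simp: measurable_def measure_subprob)

definition largest :: "'a::linorder list \<Rightarrow> 'a" where
  "largest xs = rev (sort xs) ! 0"

definition second_largest :: "'a::linorder list \<Rightarrow> 'a" where
  "second_largest xs = rev (sort xs) ! 1"

lemma largest_eq_nth_sort: "xs \<noteq> [] \<Longrightarrow> largest xs = sort xs ! (length xs - 1)"
  by (simp add: largest_def rev_nth)

lemma second_largest_eq_nth_sort: "length xs \<ge> 2 \<Longrightarrow> second_largest xs = sort xs ! (length xs - 2)"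
  by (simp add: second_largest_def rev_nth numeral_2_eq_2)

lemma largest_in_set: "xs \<noteq> [] \<Longrightarrow> largest xs \<in> set xs"
  using nth_mem[of 0 "rev (sort xs)"] by (simp add: largest_def)

lemma second_largest_in_set: "length xs \<ge> 2 \<Longrightarrow> second_largest xs \<in> set xs"
  using nth_mem[of 1 "rev (sort xs)"] by (simp add: second_largest_def)

lemma largest_le_iff:
  assumes "xs \<noteq> []"
  shows "largest xs \<le> u \<longleftrightarrow> (\<forall>x\<in>set xs. x \<le> u)"
proof
  assume le: "largest xs \<le> u"
  show "\<forall>x\<in>set xs. x \<le> u"
  proof
    fix x assume "x \<in> set xs"
    then obtain i where "i < length xs" "x = sort xs ! i"
      by (metis in_set_conv_nth length_sort set_sort)
    then have "x \<le> sort xs ! (length xs - 1)"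
      by (auto intro: sorted_nth_mono)
    with le show "x \<le> u" using assms by (simp add: largest_eq_nth_sort)
  qed
qed (use assms largest_in_set in blast)

lemma second_largest_le_largest:
  assumes "length xs \<ge> 2"
  shows "second_largest xs \<le> largest xs"
proof -
  have "xs \<noteq> []" using assms by auto
  then show ?thesis
    using assms by (simp add: largest_eq_nth_sort second_largest_eq_nth_sort sorted_nth_mono)
qed

lemma second_largest_le_iff:
  assumes "length xs \<ge> 2"
  shows "second_largest xs \<le> v \<longleftrightarrow> length (filter (\<lambda>x. v < x) xs) \<le> 1"
proof -
  let ?s = "sort xs" and ?N = "length xs"
  let ?I = "{i. i < ?N \<and> v < ?s ! i}"
  have count: "length (filter (\<lambda>x. v < x) xs) = card ?I"
  proof -
    have "length (filter (\<lambda>x. v < x) xs) = length (filter (\<lambda>x. v < x) ?s)"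
      by (simp add: filter_sort)
    then show ?thesis by (simp add: length_filter_conv_card)
  qed
  show ?thesis
  proof
    assume le: "second_largest xs \<le> v"
    have "?I \<subseteq> {?N - 1}"
    proof
      fix i assume i: "i \<in> ?I"
      have "\<not> i \<le> ?N - 2"
      proof
        assume "i \<le> ?N - 2"
        then have "?s ! i \<le> second_largest xs"
          using assms by (simp add: second_largest_eq_nth_sort sorted_nth_mono)
        with i le show False by (auto dest: order.trans)
      qed
      with i show "i \<in> {?N - 1}" by auto
    qed
    then have "card ?I \<le> 1"
      using card_mono[of "{?N - 1}" ?I] by simp
    with count show "length (filter (\<lambda>x. v < x) xs) \<le> 1" by simp
  next
    assume le: "length (filter (\<lambda>x. v < x) xs) \<le> 1"
    show "second_largest xs \<le> v"
    proof (rule ccontr)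
      assume "\<not> second_largest xs \<le> v"
      then have "{?N - 2, ?N - 1} \<subseteq> ?I"
        using assms sorted_nth_mono[of ?s "?N - 2" "?N - 1"]
        by (auto simp: second_largest_eq_nth_sort not_le intro: less_le_trans)
      then have "2 \<le> card ?I"
        using card_mono[of ?I "{?N - 2, ?N - 1}"] assms by simp
      with le count show False by simp
    qed
  qed
qed

definition dice_list :: "nat \<Rightarrow> nat \<Rightarrow> nat list pmf" where
  "dice_list N a = map_pmf (\<lambda>f. map f [0..<N]) (dice N a)"

lemma dice_list_0: "dice_list 0 a = return_pmf []"
  by (simp add: dice_list_def map_pmf_const)

lemma dice_list_Suc:
  "dice_list (Suc N) a = bind_pmf (pmf_of_set {1..a}) (\<lambda>c. map_pmf (\<lambda>xs. xs @ [c]) (dice_list N a))"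
proof -
  have "map (f(N := c)) [0..<Suc N] = map f [0..<N] @ [c]" for f :: "nat \<Rightarrow> nat" and c
    by simp
  then show ?thesis
    unfolding dice_list_def dice_def lessThan_Suc
    by (simp add: Pi_pmf_insert' map_bind_pmf pmf.map_comp o_def bind_return_pmf map_pmf_def bind_assoc_pmf)
qed

lemma set_pmf_dice_list:
  assumes "a \<ge> 1" "xs \<in> set_pmf (dice_list N a)"
  shows "length xs = N \<and> set xs \<subseteq> {1..a}"
  using assms(2)
proof (induction N arbitrary: xs)
  case 0
  then show ?case by (simp add: dice_list_0)
next
  case (Suc N)
  then obtain c ys where "c \<in> {1..a}" "ys \<in> set_pmf (dice_list N a)" "xs = ys @ [c]"
    using assms(1) by (auto simp: dice_list_Suc set_pmf_of_set)
  with Suc.IH show ?case by auto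
qed

lemma prob_dice_list_Suc:
  assumes "a \<ge> 1"
  shows "measure_pmf.prob (dice_list (Suc N) a) E
       = (\<Sum>c=1..a. measure_pmf.prob (dice_list N a) {xs. xs @ [c] \<in> E}) / real a"
  using assms by (simp add: dice_list_Suc measure_bind_pmf integral_pmf_of_set vimage_def)

lemma prob_dice_list_all_le:
  assumes "a \<ge> 1" "v \<le> a"
  shows "measure_pmf.prob (dice_list N a) {xs. \<forall>x\<in>set xs. x \<le> v} = (real v / real a) ^ N"
proof (induction N)
  case 0
  then show ?case by (simp add: dice_list_0)
next
  case (Suc N)
  let ?E = "{xs. \<forall>x\<in>set xs. x \<le> v}"
  have "measure_pmf.prob (dice_list (Suc N) a) ?E
      = (\<Sum>c=1..a. if c \<le> v then measure_pmf.prob (dice_list N a) ?E else 0) / real a"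
    unfolding prob_dice_list_Suc[OF assms(1)] by (intro arg_cong2[where f="(/)"] sum.cong) auto
  also have "\<dots> = real v * (real v / real a) ^ N / real a"
  proof -
    have "{1..a} \<inter> {c. c \<le> v} = {1..v}" using assms(2) by auto
    then show ?thesis by (simp add: sum.If_cases Suc)
  qed
  finally show ?case
    using assms by (simp add: field_simps)
qed

text \<open>For \<open>v \<le> u \<le> a\<close>: the \<open>v ^ N\<close> outcomes with all dice at most \<open>v\<close>, plus the
  \<open>N (u - v) v ^ (N - 1)\<close> outcomes with exactly one die in \<open>{v<..u}\<close> and the others at most \<open>v\<close>.\<close>
definition top_two_cdf :: "nat \<Rightarrow> nat \<Rightarrow> nat \<Rightarrow> nat \<Rightarrow> real" where
  "top_two_cdf N a u v = (real v ^ N + real N * (real u - real v) * real v ^ (N - 1)) / real a ^ N"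

lemma prob_dice_list_at_most_one_gt:
  assumes "a \<ge> 1" "v \<le> u" "u \<le> a"
  shows "measure_pmf.prob (dice_list N a)
           {xs. (\<forall>x\<in>set xs. x \<le> u) \<and> length (filter (\<lambda>x. v < x) xs) \<le> 1}
       = top_two_cdf N a u v"
  unfolding top_two_cdf_def
proof (induction N)
  case 0
  then show ?case by (simp add: dice_list_0)
next
  case (Suc N)
  let ?E = "{xs. (\<forall>x\<in>set xs. x \<le> u) \<and> length (filter (\<lambda>x. v < x) xs) \<le> 1}"
  let ?F = "{xs. \<forall>x\<in>set xs. x \<le> v}"
  let ?M = "measure_pmf.prob (dice_list N a)"
  have step: "?M {xs. xs @ [c] \<in> ?E}
        = (if c \<le> v then ?M ?E else 0) + (if v < c \<and> c \<le> u then ?M ?F else 0)" for c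
  proof -
    consider "c \<le> v" | "v < c" "c \<le> u" | "u < c" by linarith
    then show ?thesis
    proof cases
      case 1
      then have "{xs. xs @ [c] \<in> ?E} = ?E" using assms by auto
      with 1 show ?thesis by simp
    next
      case 2
      then have "{xs. xs @ [c] \<in> ?E} = ?F" using assms by (auto simp: filter_empty_conv)
      with 2 show ?thesis by simp
    qed (use assms in auto)
  qed
  have "measure_pmf.prob (dice_list (Suc N) a) ?E
      = ((\<Sum>c=1..a. if c \<le> v then ?M ?E else 0) + (\<Sum>c=1..a. if v < c \<and> c \<le> u then ?M ?F else 0)) / real a"
    unfolding prob_dice_list_Suc[OF assms(1)] step by (simp add: sum.distrib)
  also have "\<dots> = (real v * ?M ?E + (real u - real v) * ?M ?F) / real a"
  proof -
    have "{c \<in> {1..a}. c \<le> v} = {1..v}" "{c \<in> {1..a}. v < c \<and> c \<le> u} = {v<..u}"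
      using assms by auto
    then show ?thesis
      using assms by (simp add: sum.If_cases Int_def of_nat_diff)
  qed
  also have "\<dots> = (real v * ((real v ^ N + real N * (real u - real v) * real v ^ (N - 1)) / real a ^ N)
                     + (real u - real v) * (real v / real a) ^ N) / real a"
    by (simp only: Suc.IH prob_dice_list_all_le[OF assms(1) order.trans[OF assms(2,3)]])
  also have "\<dots> = (real v ^ Suc N + real (Suc N) * (real u - real v) * real v ^ (Suc N - 1)) / real a ^ Suc N"
    using assms by (cases N) (simp_all add: field_simps power_divide)
  finally show ?case .
qed

lemma dice_list_top_two_bounds:
  assumes "a \<ge> 1" "N \<ge> 2" "xs \<in> set_pmf (dice_list N a)"
  shows "1 \<le> second_largest xs" "second_largest xs \<le> largest xs" "largest xs \<le> a"
proof -
  have xs: "length xs = N" "set xs \<subseteq> {1..a}"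
    using set_pmf_dice_list[OF assms(1,3)] by auto
  then have len: "length xs \<ge> 2" and ne: "xs \<noteq> []"
    using assms(2) by auto
  show "1 \<le> second_largest xs" using second_largest_in_set[OF len] xs by auto
  show "second_largest xs \<le> largest xs" using second_largest_le_largest[OF len] .
  show "largest xs \<le> a" using largest_in_set[OF ne] xs by auto
qed

lemma prob_dice_list_top_two_le:
  assumes "a \<ge> 1" "N \<ge> 2"
  shows "measure_pmf.prob (dice_list N a) {xs. largest xs \<le> u \<and> second_largest xs \<le> v}
       = top_two_cdf N a (min u a) (min v (min u a))"
proof -
  let ?u = "min u a" let ?v = "min v ?u"
  have "measure_pmf.prob (dice_list N a) {xs. largest xs \<le> u \<and> second_largest xs \<le> v}
      = measure_pmf.prob (dice_list N a)
          {xs. (\<forall>x\<in>set xs. x \<le> ?u) \<and> length (filter (\<lambda>x. ?v < x) xs) \<le> 1}"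
  proof (rule measure_pmf_prob_cong_support)
    fix xs assume xs: "xs \<in> set_pmf (dice_list N a)"
    then have len: "length xs \<ge> 2" and ne: "xs \<noteq> []"
      using set_pmf_dice_list[OF assms(1) xs] assms(2) by auto
    have "largest xs \<le> u \<and> second_largest xs \<le> v \<longleftrightarrow> largest xs \<le> ?u \<and> second_largest xs \<le> ?v"
      using dice_list_top_two_bounds[OF assms xs] by auto
    then show "xs \<in> {xs. largest xs \<le> u \<and> second_largest xs \<le> v}
      \<longleftrightarrow> xs \<in> {xs. (\<forall>x\<in>set xs. x \<le> ?u) \<and> length (filter (\<lambda>x. ?v < x) xs) \<le> 1}"
      unfolding mem_Collect_eq largest_le_iff[OF ne, symmetric] second_largest_le_iff[OF len, symmetric] .
  qed
  also have "\<dots> = top_two_cdf N a ?u ?v"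
    using assms by (intro prob_dice_list_at_most_one_gt) auto
  finally show ?thesis .
qed

lemma prob_eq_pair_by_joint_cdf:
  fixes p :: "'a pmf" and f g :: "'a \<Rightarrow> nat"
  assumes "1 \<le> y1" "1 \<le> y2"
  defines "C u v \<equiv> measure_pmf.prob p {x. f x \<le> u \<and> g x \<le> v}"
  shows "measure_pmf.prob p {x. f x = y1 \<and> g x = y2}
       = C y1 y2 - C (y1 - 1) y2 - C y1 (y2 - 1) + C (y1 - 1) (y2 - 1)"
proof -
  define A where "A u v = {x. f x \<le> u \<and> g x \<le> v}" for u v
  let ?M = "measure_pmf.prob p"
  have eq: "{x. f x = y1 \<and> g x = y2} = A y1 y2 - (A (y1 - 1) y2 \<union> A y1 (y2 - 1))"
    using assms(1,2) unfolding A_def by auto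
  have inter: "A y1 (y2 - 1) \<inter> A (y1 - 1) y2 = A (y1 - 1) (y2 - 1)"
    unfolding A_def by auto
  have "?M {x. f x = y1 \<and> g x = y2} = ?M (A y1 y2) - ?M (A (y1 - 1) y2 \<union> A y1 (y2 - 1))"
    unfolding eq by (rule measure_pmf.finite_measure_Diff) (auto simp: A_def)
  also have "?M (A (y1 - 1) y2 \<union> A y1 (y2 - 1)) = ?M (A (y1 - 1) y2) + ?M (A y1 (y2 - 1) - A (y1 - 1) y2)"
    by (rule measure_pmf.finite_measure_Union') auto
  also have "?M (A y1 (y2 - 1) - A (y1 - 1) y2) = ?M (A y1 (y2 - 1)) - ?M (A (y1 - 1) (y2 - 1))"
    using measure_pmf.finite_measure_Diff'[where A="A y1 (y2 - 1)" and B="A (y1 - 1) y2"] inter by simp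
  finally show ?thesis
    unfolding C_def A_def by simp
qed

definition top_two_pmf :: "nat \<Rightarrow> nat \<Rightarrow> nat \<Rightarrow> nat \<Rightarrow> real" where
  "top_two_pmf N a y1 y2 =
     (if y2 = y1 then real y1 ^ N - (real y1 - 1) ^ N - real N * (real y1 - 1) ^ (N - 1)
      else real N * (real y2 ^ (N - 1) - (real y2 - 1) ^ (N - 1))) / real a ^ N"

lemma prob_dice_list_top_two_eq:
  assumes "a \<ge> 1" "N \<ge> 2" "1 \<le> y2" "y2 \<le> y1" "y1 \<le> a"
  shows "measure_pmf.prob (dice_list N a) {xs. largest xs = y1 \<and> second_largest xs = y2}
       = top_two_pmf N a y1 y2"
proof -
  let ?C = "\<lambda>u v. top_two_cdf N a (min u a) (min v (min u a))"
  have "measure_pmf.prob (dice_list N a) {xs. largest xs = y1 \<and> second_largest xs = y2}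
      = ?C y1 y2 - ?C (y1 - 1) y2 - ?C y1 (y2 - 1) + ?C (y1 - 1) (y2 - 1)"
    using assms by (simp add: prob_eq_pair_by_joint_cdf prob_dice_list_top_two_le)
  also have "\<dots> = top_two_pmf N a y1 y2"
  proof -
    have mins: "min y1 a = y1" "min (y1 - 1) a = y1 - 1" "min y2 y1 = y2"
      "min (y2 - 1) y1 = y2 - 1" "min (y2 - 1) (y1 - 1) = y2 - 1"
      using assms by auto
    show ?thesis
    proof (cases "y2 = y1")
      case True
      then have "min y2 (y1 - 1) = y1 - 1" by simp
      with True assms show ?thesis
        unfolding mins by (simp add: top_two_cdf_def top_two_pmf_def of_nat_diff field_simps)
    next
      case False
      then have "min y2 (y1 - 1) = y2" using assms by simp
      with False assms show ?thesis
        unfolding mins by (simp add: top_two_cdf_def top_two_pmf_def of_nat_diff field_simps)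
    qed
  qed
  finally show ?thesis .
qed

lemma expectation_dice_list_top_two:
  assumes "a \<ge> 1" "N \<ge> 2"
  shows "measure_pmf.expectation (dice_list N a) (\<lambda>xs. g (largest xs) (second_largest xs))
       = (\<Sum>y1=1..a. \<Sum>y2=1..y1. top_two_pmf N a y1 y2 * g y1 y2)"
proof -
  let ?T = "\<lambda>xs. (largest xs, second_largest xs)"
  let ?S = "SIGMA y1:{1..a}. {1..y1}"
  have support: "set_pmf (map_pmf ?T (dice_list N a)) \<subseteq> ?S"
  proof
    fix z assume "z \<in> set_pmf (map_pmf ?T (dice_list N a))"
    then obtain xs where xs: "xs \<in> set_pmf (dice_list N a)" "z = ?T xs" by auto
    with dice_list_top_two_bounds[OF assms xs(1)] show "z \<in> ?S" by auto
  qed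
  have "measure_pmf.expectation (dice_list N a) (\<lambda>xs. g (largest xs) (second_largest xs))
      = measure_pmf.expectation (map_pmf ?T (dice_list N a)) (case_prod g)"
    by simp
  also have "\<dots> = (\<Sum>z\<in>?S. pmf (map_pmf ?T (dice_list N a)) z * case_prod g z)"
    using support by (subst integral_measure_pmf[of ?S]) auto
  also have "\<dots> = (\<Sum>y1=1..a. \<Sum>y2=1..y1.
      measure_pmf.prob (dice_list N a) {xs. largest xs = y1 \<and> second_largest xs = y2} * g y1 y2)"
    by (subst sum.Sigma) (auto simp: pmf_map vimage_def split_def intro!: sum.cong)
  also have "\<dots> = (\<Sum>y1=1..a. \<Sum>y2=1..y1. top_two_pmf N a y1 y2 * g y1 y2)"
    using assms by (intro sum.cong refl) (simp add: prob_dice_list_top_two_eq)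
  finally show ?thesis .
qed

lemma sum_triangle_split:
  fixes f :: "nat \<Rightarrow> nat \<Rightarrow> 'a::comm_monoid_add"
  assumes "v \<le> a"
  shows "(\<Sum>y1=1..a. \<Sum>y2=1..y1. f y1 y2)
       = (\<Sum>y1=1..v. \<Sum>y2=1..y1. f y1 y2) + (\<Sum>y1=v+1..a. \<Sum>y2=1..v. f y1 y2)
         + (\<Sum>y1=v+1..a. \<Sum>y2=v+1..y1. f y1 y2)"
proof -
  have split: "(\<Sum>y=1..k. h y) = (\<Sum>y=1..v. h y) + (\<Sum>y=v+1..k. h y)" if "v \<le> k"
    for k and h :: "nat \<Rightarrow> 'a"
    using that sum.ub_add_nat[of 1 v h "k - v"] by simp
  have "(\<Sum>y1=1..a. \<Sum>y2=1..y1. f y1 y2)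
      = (\<Sum>y1=1..v. \<Sum>y2=1..y1. f y1 y2) + (\<Sum>y1=v+1..a. \<Sum>y2=1..y1. f y1 y2)"
    using assms by (rule split)
  also have "(\<Sum>y1=v+1..a. \<Sum>y2=1..y1. f y1 y2)
      = (\<Sum>y1=v+1..a. (\<Sum>y2=1..v. f y1 y2) + (\<Sum>y2=v+1..y1. f y1 y2))"
    by (intro sum.cong refl split) auto
  finally show ?thesis
    by (simp add: sum.distrib add.assoc)
qed

lemma sum_top_two_pmf_second_gt:
  assumes "a \<ge> 1" "N \<ge> 2" "v \<le> a"
  shows "(\<Sum>y1=v+1..a. \<Sum>y2=v+1..y1. top_two_pmf N a y1 y2) = 1 - top_two_cdf N a a v"
proof -
  let ?p = "dice_list N a"
  let ?gt = "\<lambda>y1 y2. if v < y2 then 1 else 0 :: real"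
  have "1 - top_two_cdf N a a v = 1 - measure_pmf.prob ?p {xs. largest xs \<le> a \<and> second_largest xs \<le> v}"
    using assms by (simp add: prob_dice_list_top_two_le min_absorb1)
  also have "\<dots> = measure_pmf.prob ?p (- {xs. largest xs \<le> a \<and> second_largest xs \<le> v})"
    using measure_pmf.prob_compl[of "{xs. largest xs \<le> a \<and> second_largest xs \<le> v}" ?p]
    by (simp add: Compl_eq_Diff_UNIV)
  also have "\<dots> = measure_pmf.expectation ?p (\<lambda>xs. ?gt (largest xs) (second_largest xs))"
  proof -
    have "measure_pmf.prob ?p (- {xs. largest xs \<le> a \<and> second_largest xs \<le> v})
        = measure_pmf.prob ?p {xs. v < second_largest xs}"
      using dice_list_top_two_bounds[OF assms(1,2)] by (intro measure_pmf_prob_cong_support) auto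
    moreover have "(\<lambda>xs. ?gt (largest xs) (second_largest xs)) = indicator {xs. v < second_largest xs}"
      by (auto simp: indicator_def)
    ultimately show ?thesis by simp
  qed
  also have "\<dots> = (\<Sum>y1=1..a. \<Sum>y2=1..y1. top_two_pmf N a y1 y2 * ?gt y1 y2)"
    by (rule expectation_dice_list_top_two[OF assms(1,2), of ?gt])
  also have "\<dots> = (\<Sum>y1=v+1..a. \<Sum>y2=v+1..y1. top_two_pmf N a y1 y2)"
  proof -
    have "(\<Sum>y1=1..v. \<Sum>y2=1..y1. top_two_pmf N a y1 y2 * ?gt y1 y2) = 0"
      "(\<Sum>y1=v+1..a. \<Sum>y2=1..v. top_two_pmf N a y1 y2 * ?gt y1 y2) = 0"
      by (auto intro!: sum.neutral)
    moreover have "(\<Sum>y1=v+1..a. \<Sum>y2=v+1..y1. top_two_pmf N a y1 y2 * ?gt y1 y2)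
        = (\<Sum>y1=v+1..a. \<Sum>y2=v+1..y1. top_two_pmf N a y1 y2)"
      by (intro sum.cong) auto
    ultimately show ?thesis
      unfolding sum_triangle_split[OF assms(3)] by simp
  qed
  finally show ?thesis ..
qed

lemma prob_dice_top_two_le:
  assumes "a \<ge> 1" "d \<ge> 1" "m \<ge> 2" "n \<ge> 2"
  shows "measure_pmf.prob (pair_pmf (dice m a) (dice n d))
           {(X, Y). kth_largest 1 m X \<le> kth_largest 1 n Y \<and> kth_largest 2 m X \<le> kth_largest 2 n Y}
       = (\<Sum>y1=1..d. \<Sum>y2=1..y1. top_two_pmf n d y1 y2 * top_two_cdf m a (min y1 a) (min y2 a))"
proof -
  let ?E = "{(xs, ys). largest xs \<le> largest ys \<and> second_largest xs \<le> second_largest ys}"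
  let ?F = "\<lambda>y1 y2. top_two_cdf m a (min y1 a) (min y2 a)"
  have "measure_pmf.prob (pair_pmf (dice m a) (dice n d))
           {(X, Y). kth_largest 1 m X \<le> kth_largest 1 n Y \<and> kth_largest 2 m X \<le> kth_largest 2 n Y}
      = measure_pmf.prob (map_pmf (\<lambda>(X, Y). (map X [0..<m], map Y [0..<n])) (pair_pmf (dice m a) (dice n d))) ?E"
    by (auto simp: kth_largest_def largest_def second_largest_def intro!: arg_cong[where f="measure_pmf.prob _"])
  also have "\<dots> = measure_pmf.prob (pair_pmf (dice_list m a) (dice_list n d)) ?E"
    by (simp only: map_pair dice_list_def)
  also have "\<dots> = measure_pmf.expectation (dice_list n d)
      (\<lambda>ys. measure_pmf.prob (dice_list m a) {xs. largest xs \<le> largest ys \<and> second_largest xs \<le> second_largest ys})"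
  proof -
    have "pair_pmf (dice_list m a) (dice_list n d)
        = bind_pmf (dice_list n d) (\<lambda>ys. map_pmf (\<lambda>xs. (xs, ys)) (dice_list m a))"
      unfolding pair_pmf_def map_pmf_def by (rule bind_commute_pmf)
    then show ?thesis by (simp add: measure_bind_pmf vimage_def)
  qed
  also have "\<dots> = measure_pmf.expectation (dice_list n d) (\<lambda>ys. ?F (largest ys) (second_largest ys))"
  proof (intro integral_cong_AE AE_pmfI)
    fix ys assume "ys \<in> set_pmf (dice_list n d)"
    then have "second_largest ys \<le> largest ys"
      using dice_list_top_two_bounds[OF assms(2,4)] by blast
    then show "measure_pmf.prob (dice_list m a) {xs. largest xs \<le> largest ys \<and> second_largest xs \<le> second_largest ys}
        = ?F (largest ys) (second_largest ys)"
      using assms by (simp add: prob_dice_list_top_two_le min.absorb1 min.left_commute min.assoc)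
  qed auto
  also have "\<dots> = (\<Sum>y1=1..d. \<Sum>y2=1..y1. top_two_pmf n d y1 y2 * ?F y1 y2)"
    by (rule expectation_dice_list_top_two[OF assms(2,4), of ?F])
  finally show ?thesis .
qed

lemma sum_top_two_pmf_times_cdf:
  "(\<Sum>y1=1..k. \<Sum>y2=1..y1. top_two_pmf n d y1 y2 * top_two_cdf m a y1 y2)
   = (\<Sum>y1=2..k. \<Sum>y2=1..y1-1.
        real n * (real y2 ^ (n-1) - (real y2 - 1) ^ (n-1))
        * (real m * (real y1 - real y2) * real y2 ^ (m-1) + real y2 ^ m)
        / (real a ^ m * real d ^ n))
     + (\<Sum>y1=1..k. (real y1 ^ n - (real y1 - 1) ^ n - real n * (real y1 - 1) ^ (n-1))
        * real y1 ^ m / (real a ^ m * real d ^ n))"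
proof -
  let ?f = "\<lambda>y1 y2. top_two_pmf n d y1 y2 * top_two_cdf m a y1 y2"
  have "(\<Sum>y2=1..y1. ?f y1 y2) = ?f y1 y1 + (\<Sum>y2=1..y1-1. ?f y1 y2)" if "y1 \<in> {1..k}" for y1
  proof -
    have "{1..y1} = insert y1 {1..y1-1}" using that by auto
    then show ?thesis by (simp only:) (subst sum.insert, auto)
  qed
  then have "(\<Sum>y1=1..k. \<Sum>y2=1..y1. ?f y1 y2)
      = (\<Sum>y1=1..k. \<Sum>y2=1..y1-1. ?f y1 y2) + (\<Sum>y1=1..k. ?f y1 y1)"
    by (simp add: sum.distrib add.commute)
  also have "(\<Sum>y1=1..k. \<Sum>y2=1..y1-1. ?f y1 y2) = (\<Sum>y1=2..k. \<Sum>y2=1..y1-1. ?f y1 y2)"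
    by (cases k) (simp_all add: sum.atLeast_Suc_atMost numeral_2_eq_2)
  also have "\<dots> = (\<Sum>y1=2..k. \<Sum>y2=1..y1-1.
        real n * (real y2 ^ (n-1) - (real y2 - 1) ^ (n-1))
        * (real m * (real y1 - real y2) * real y2 ^ (m-1) + real y2 ^ m)
        / (real a ^ m * real d ^ n))"
    by (intro sum.cong refl) (auto simp: top_two_pmf_def top_two_cdf_def ac_simps)
  also have "(\<Sum>y1=1..k. ?f y1 y1) = (\<Sum>y1=1..k. (real y1 ^ n - (real y1 - 1) ^ n - real n * (real y1 - 1) ^ (n-1))
        * real y1 ^ m / (real a ^ m * real d ^ n))"
    by (intro sum.cong refl) (simp add: top_two_pmf_def top_two_cdf_def ac_simps)
  finally show ?thesis .
qed

lemma sum_top_two_pmf_times_cdf_capped: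
  "(\<Sum>y1=a+1..d. \<Sum>y2=1..a. top_two_pmf n d y1 y2 * top_two_cdf m a a y2)
   = (\<Sum>y1=a+1..d. \<Sum>y2=1..a.
        real n * (real y2 ^ (n-1) - (real y2 - 1) ^ (n-1))
        * (real m * (real a - real y2) * real y2 ^ (m-1) + real y2 ^ m)
        / (real a ^ m * real d ^ n))"
  by (intro sum.cong refl) (auto simp: top_two_pmf_def top_two_cdf_def ac_simps)

lemma one_minus_top_two_cdf:
  assumes "a \<ge> 1" "d \<ge> 1" "n \<ge> 1"
  shows "1 - top_two_cdf n d d a
       = (real a ^ m * real d ^ n - real n * (real d - real a) * real a ^ (n+m-1) - real a ^ (m+n))
         / (real a ^ m * real d ^ n)"
proof -
  have "real a ^ (n+m-1) = real a ^ (n-1) * real a ^ m"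
    using assms(3) by (simp add: power_add[symmetric])
  moreover have "real a ^ (m+n) = real a ^ n * real a ^ m"
    by (simp add: power_add)
  ultimately show ?thesis using assms(1,2)
    by (simp add: top_two_cdf_def field_simps)
qed

theorem proposition6p4:
  fixes a d m n :: nat
  assumes "a \<ge> 1" and "d \<ge> 1" and "m \<ge> 2" and "n \<ge> 2"
  defines "P \<equiv> measure_pmf.prob (pair_pmf (dice m a) (dice n d))
             {(X, Y). kth_largest 1 m X \<le> kth_largest 1 n Y \<and> kth_largest 2 m X \<le> kth_largest 2 n Y}"
  shows "(a \<ge> d \<longrightarrow>
           P = (\<Sum>y1=2..d. \<Sum>y2=1..y1-1.
                  real n * (real y2 ^ (n-1) - (real y2 - 1) ^ (n-1))
                  * (real m * (real y1 - real y2) * real y2 ^ (m-1) + real y2 ^ m)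
                  / (real a ^ m * real d ^ n))
             + (\<Sum>y1=1..d. (real y1 ^ n - (real y1 - 1) ^ n - real n * (real y1 - 1) ^ (n-1))
                  * real y1 ^ m / (real a ^ m * real d ^ n)))
       \<and> (a \<le> d \<longrightarrow>
           P = (\<Sum>y1=2..a. \<Sum>y2=1..y1-1.
                  real n * (real y2 ^ (n-1) - (real y2 - 1) ^ (n-1))
                  * (real m * (real y1 - real y2) * real y2 ^ (m-1) + real y2 ^ m)
                  / (real a ^ m * real d ^ n))
             + (\<Sum>y1=1..a. (real y1 ^ n - (real y1 - 1) ^ n - real n * (real y1 - 1) ^ (n-1))
                  * real y1 ^ m / (real a ^ m * real d ^ n))
             + (\<Sum>y1=a+1..d. \<Sum>y2=1..a.
                  real n * (real y2 ^ (n-1) - (real y2 - 1) ^ (n-1))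
                  * (real m * (real a - real y2) * real y2 ^ (m-1) + real y2 ^ m)
                  / (real a ^ m * real d ^ n))
             + (real a ^ m * real d ^ n - real n * (real d - real a) * real a ^ (n+m-1) - real a ^ (m+n))
                  / (real a ^ m * real d ^ n))"
proof -
  let ?f = "\<lambda>y1 y2. top_two_pmf n d y1 y2 * top_two_cdf m a (min y1 a) (min y2 a)"
  have P: "P = (\<Sum>y1=1..d. \<Sum>y2=1..y1. ?f y1 y2)"
    unfolding P_def by (rule prob_dice_top_two_le[OF assms(1-4)])
  have "P = (\<Sum>y1=1..d. \<Sum>y2=1..y1. top_two_pmf n d y1 y2 * top_two_cdf m a y1 y2)" if "d \<le> a"
    unfolding P using that by (intro sum.cong refl) auto
  moreover have "P = (\<Sum>y1=1..a. \<Sum>y2=1..y1. top_two_pmf n d y1 y2 * top_two_cdf m a y1 y2)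
      + (\<Sum>y1=a+1..d. \<Sum>y2=1..a. top_two_pmf n d y1 y2 * top_two_cdf m a a y2)
      + (1 - top_two_cdf n d d a)" if "a \<le> d"
  proof -
    have cdf_one: "top_two_cdf m a a a = 1"
      using assms(1) by (simp add: top_two_cdf_def)
    then have "(\<Sum>y1=a+1..d. \<Sum>y2=a+1..y1. ?f y1 y2) = (\<Sum>y1=a+1..d. \<Sum>y2=a+1..y1. top_two_pmf n d y1 y2)"
      by (intro sum.cong refl) auto
    with that show ?thesis
      unfolding P sum_triangle_split[OF that] sum_top_two_pmf_second_gt[OF assms(2,4) that, symmetric]
      by (intro arg_cong2[where f="(+)"] sum.cong refl) (auto simp: cdf_one)
  qed
  moreover have "n \<ge> 1" using assms(4) by simp
  ultimately show ?thesis
    using one_minus_top_two_cdf[OF assms(1,2), of n m]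
    unfolding sum_top_two_pmf_times_cdf sum_top_two_pmf_times_cdf_capped by auto
qed

end
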